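(* Fix $m\ge2$, an integer panel size $k\ge1$, and a budget $0<B<m$. For every panel decision function $\widetilde x:\mathcal L^k\to\mathcal X_B$ there exists a participatory budgeting instance $\langle m,B,(\mathrm{Cost}_1,\dots,\mathrm{Cost}_n)\rangle$ such that for every $\rho>1$, $$\mathbb E_{S\sim\mathcal U_{k,n}}\big[\textsc{Social-Cost}(\widetilde x(S))\big]>\rho\cdot\textsc{Social-Opt}.$$
   Context: A participatory budgeting instance $\langle m,B,(\mathrm{Cost}_1,\dots,\mathrm{Cost}_n)\rangle$: $m$ projects, budget $B>0$, and for each agent $i\in[n]$ a cost function $\mathrm{Cost}_i:[0,1]^m\to[0,1]$ that is monotone (non-increasing when the allocation increases coordinatewise) and $1$-Lipschitz w.r.t. $\|\cdot\|_1$. $\mathcal L$ is the set of $1$-Lipschitz functions $[0,1]^m\to[0,1]$; $\mathcal X_B=\{x\in[0,1]^m:\sum_jx_j\le B\}$. For a panel $S$ of size $k$ (with $n\ge k$), $\widetilde x(S)$ denotes $\widetilde x$ applied to $(\mathrm{Cost}_i)_{i\in S}$. $\textsc{Social-Cost}(x)=\frac1n\sum_i\mathrm{Cost}_i(x)$, $\textsc{Social-Opt}=\min_{x\in\mathcal X_B}\textsc{Social-Cost}(x)$. $\mathcal U_{k,n}$ is the uniform distribution over size-$k$ subsets of $[n]$. *)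

theory Defs
  imports "HOL-Analysis.Analysis"
begin

text \<open>Allocations live in [0,1]^m, modelled as vectors of type real^'m with m = CARD('m).\<close>

definition cube :: "(real^'m) set" where
  "cube = {x. \<forall>j. 0 \<le> x$j \<and> x$j \<le> 1}"

definition l1dist :: "real^'m \<Rightarrow> real^'m \<Rightarrow> real" where
  "l1dist x y = (\<Sum>j\<in>UNIV. \<bar>x$j - y$j\<bar>)"

definition Lfun :: "(real^'m \<Rightarrow> real) \<Rightarrow> bool" where
  "Lfun f \<longleftrightarrow> (\<forall>x\<in>cube. 0 \<le> f x \<and> f x \<le> 1) \<and>
               (\<forall>x\<in>cube. \<forall>y\<in>cube. \<bar>f x - f y\<bar> \<le> l1dist x y)"

definition mono_cost :: "(real^'m \<Rightarrow> real) \<Rightarrow> bool" where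
  "mono_cost f \<longleftrightarrow> (\<forall>x\<in>cube. \<forall>y\<in>cube. (\<forall>j. x$j \<le> y$j) \<longrightarrow> f y \<le> f x)"

definition XB :: "real \<Rightarrow> (real^'m) set" where
  "XB B = {x \<in> cube. (\<Sum>j\<in>UNIV. x$j) \<le> B}"

definition pb_instance :: "real \<Rightarrow> nat \<Rightarrow> (nat \<Rightarrow> real^'m \<Rightarrow> real) \<Rightarrow> bool" where
  "pb_instance B n Cost \<longleftrightarrow> B > 0 \<and> (\<forall>i<n. Lfun (Cost i) \<and> mono_cost (Cost i))"

definition social_cost :: "nat \<Rightarrow> (nat \<Rightarrow> real^'m \<Rightarrow> real) \<Rightarrow> real^'m \<Rightarrow> real" where
  "social_cost n Cost x = (1 / real n) * (\<Sum>i<n. Cost i x)"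

definition social_opt :: "real \<Rightarrow> nat \<Rightarrow> (nat \<Rightarrow> real^'m \<Rightarrow> real) \<Rightarrow> real" where
  "social_opt B n Cost = (INF x\<in>XB B. social_cost n Cost x)"

definition panel_decision :: "nat \<Rightarrow> real \<Rightarrow> ((real^'m \<Rightarrow> real) list \<Rightarrow> real^'m) \<Rightarrow> bool" where
  "panel_decision k B xt \<longleftrightarrow>
     (\<forall>Cs. length Cs = k \<and> (\<forall>f\<in>set Cs. Lfun f) \<longrightarrow> xt Cs \<in> XB B)"

definition panel_alloc :: "((real^'m \<Rightarrow> real) list \<Rightarrow> real^'m) \<Rightarrow> (nat \<Rightarrow> real^'m \<Rightarrow> real) \<Rightarrow> nat set \<Rightarrow> real^'m" where
  "panel_alloc xt Cost S = xt (map Cost (sorted_list_of_set S))"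

definition panels :: "nat \<Rightarrow> nat \<Rightarrow> nat set set" where
  "panels n k = {S. S \<subseteq> {..<n} \<and> card S = k}"

definition expected_panel_cost ::
  "nat \<Rightarrow> nat \<Rightarrow> (nat \<Rightarrow> real^'m \<Rightarrow> real) \<Rightarrow> ((real^'m \<Rightarrow> real) list \<Rightarrow> real^'m) \<Rightarrow> real" where
  "expected_panel_cost n k Cost xt =
     (\<Sum>S\<in>panels n k. social_cost n Cost (panel_alloc xt Cost S)) / real (card (panels n k))"

end

theory Submission
  imports Defs
begin

text \<open>Feed the panel decision function k agents of identically zero cost and call its
  output y. Since y spends at most B < m and m \<ge> 2, some project j receives less than
  c = min B 1. Take k zero-cost agents and k agents whose cost max 0 (c - x$j) only vanishes
  once project j is funded up to c. Funding j to exactly c costs nobody anything, so the social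
  optimum is 0; but the panel consisting of the k zero-cost agents returns y, which leaves the
  other agents with positive cost, so the expected social cost is positive.\<close>

lemma abs_component_le_l1dist: "\<bar>x$j - y$j\<bar> \<le> l1dist x y"
  unfolding l1dist_def by (rule member_le_sum[where f = "\<lambda>i. \<bar>x$i - y$i\<bar>"]) auto

lemma Lfun_zero: "Lfun (\<lambda>_. 0)"
  unfolding Lfun_def l1dist_def by (auto intro: sum_nonneg)

lemma mono_cost_const: "mono_cost (\<lambda>_. a)"
  unfolding mono_cost_def by simp

definition shortfall :: "real \<Rightarrow> 'm \<Rightarrow> real^'m \<Rightarrow> real" where
  "shortfall c j x = max 0 (c - x$j)"

lemma shortfall_nonneg: "0 \<le> shortfall c j x"
  unfolding shortfall_def by simp

lemma shortfall_axis: "shortfall c j (axis j c) = 0"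
  unfolding shortfall_def by simp

lemma Lfun_shortfall:
  fixes j :: "'m::finite"
  assumes "c \<le> 1"
  shows "Lfun (shortfall c j)"
  unfolding Lfun_def
proof safe
  fix x :: "real^'m"
  assume "x \<in> cube"
  then have "0 \<le> x$j"
    unfolding cube_def by simp
  then show "0 \<le> shortfall c j x" "shortfall c j x \<le> 1"
    using assms unfolding shortfall_def by auto
next
  fix x y :: "real^'m"
  have "\<bar>shortfall c j x - shortfall c j y\<bar> \<le> \<bar>x$j - y$j\<bar>"
    unfolding shortfall_def by auto
  also have "\<dots> \<le> l1dist x y"
    by (rule abs_component_le_l1dist)
  finally show "\<bar>shortfall c j x - shortfall c j y\<bar> \<le> l1dist x y" .
qed

lemma mono_cost_shortfall: "mono_cost (shortfall c j)"
  unfolding mono_cost_def shortfall_def by (meson diff_left_mono max.mono order_refl)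

lemma axis_in_XB:
  assumes "0 \<le> c" "c \<le> 1" "c \<le> B"
  shows "axis j c \<in> XB B"
proof -
  have "(\<Sum>i\<in>UNIV. axis j c $ i) = c"
    unfolding axis_def by simp
  then show ?thesis
    using assms unfolding XB_def cube_def axis_def by auto
qed

lemma exists_component_le_average:
  fixes y :: "real^'m"
  assumes "(\<Sum>i\<in>UNIV. y$i) \<le> B"
  obtains j where "y$j \<le> B / real CARD('m)"
proof (rule ccontr)
  assume "\<not> thesis"
  with that have "\<forall>j. B / real CARD('m) < y$j"
    by (meson not_le)
  then have "(\<Sum>j\<in>(UNIV::'m set). B / real CARD('m)) < (\<Sum>j\<in>UNIV. y$j)"
    by (intro sum_strict_mono) auto
  then show False
    using assms by simp
qed

lemma XB_obtains_component_less_min: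
  fixes y :: "real^'m"
  assumes "CARD('m) \<ge> 2" "0 < B" "B < real CARD('m)" "y \<in> XB B"
  obtains j where "y$j < min B 1"
proof -
  obtain j where j: "y$j \<le> B / real CARD('m)"
    using exists_component_le_average assms(4) unfolding XB_def by blast
  moreover have "B / real CARD('m) < min B 1"
    using assms(1-3) by (simp add: divide_less_eq)
  ultimately show thesis
    by (meson le_less_trans that)
qed

lemma social_cost_nonneg:
  assumes "\<And>i x. 0 \<le> Cost i x"
  shows "0 \<le> social_cost n Cost x"
  unfolding social_cost_def using assms by (simp add: sum_nonneg)

lemma social_cost_pos:
  assumes "\<And>i x. 0 \<le> Cost i x" and "i < n" and "0 < Cost i x"
  shows "0 < social_cost n Cost x"
proof -
  have "0 < (\<Sum>i<n. Cost i x)"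
    using assms by (intro sum_pos2[where i = i]) auto
  then show ?thesis
    unfolding social_cost_def using assms(2) by simp
qed

lemma social_opt_eq_0:
  assumes "\<And>i x. 0 \<le> Cost i x" and "x \<in> XB B" and "social_cost n Cost x = 0"
  shows "social_opt B n Cost = 0"
  unfolding social_opt_def
proof (rule antisym)
  have "bdd_below (social_cost n Cost ` XB B)"
    using social_cost_nonneg[OF assms(1)] by (intro bdd_belowI2)
  then show "(INF x\<in>XB B. social_cost n Cost x) \<le> 0"
    using cINF_lower[of "social_cost n Cost" "XB B" x] assms(2,3) by simp
  show "0 \<le> (INF x\<in>XB B. social_cost n Cost x)"
    using assms(2) by (intro cINF_greatest) (auto intro: social_cost_nonneg assms(1))
qed

lemma finite_panels: "finite (panels n k)"
  unfolding panels_def by (rule finite_subset[of _ "Pow {..<n}"]) auto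

lemma lessThan_in_panels: "k \<le> n \<Longrightarrow> {..<k} \<in> panels n k"
  unfolding panels_def by auto

lemma expected_panel_cost_pos:
  assumes "\<And>i x. 0 \<le> Cost i x" and "S \<in> panels n k"
    and "0 < social_cost n Cost (panel_alloc xt Cost S)"
  shows "0 < expected_panel_cost n k Cost xt"
proof -
  have "0 < (\<Sum>S\<in>panels n k. social_cost n Cost (panel_alloc xt Cost S))"
    using assms finite_panels by (intro sum_pos2[where i = S]) (auto intro: social_cost_nonneg)
  moreover have "0 < card (panels n k)"
    using assms(2) finite_panels card_gt_0_iff by blast
  ultimately show ?thesis
    unfolding expected_panel_cost_def by simp
qed

lemma panel_alloc_lessThan:
  assumes "\<And>i. i < k \<Longrightarrow> Cost i = f"
  shows "panel_alloc xt Cost {..<k} = xt (replicate k f)"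
proof -
  have "map Cost (sorted_list_of_set {..<k}) = replicate k f"
    using assms by (simp add: lessThan_atLeast0 list_eq_iff_nth_eq)
  then show ?thesis
    unfolding panel_alloc_def by simp
qed

theorem theorem3p4:
  fixes B :: real and k :: nat
    and xt :: "(real^'m \<Rightarrow> real) list \<Rightarrow> real^'m"
  assumes "CARD('m) \<ge> 2" and "k \<ge> 1" and "0 < B" and "B < real CARD('m)"
    and "panel_decision k B xt"
  shows "\<exists>n (Cost :: nat \<Rightarrow> real^'m \<Rightarrow> real). n \<ge> k \<and> pb_instance B n Cost \<and>
           (\<forall>\<rho>::real. \<rho> > 1 \<longrightarrow> expected_panel_cost n k Cost xt > \<rho> * social_opt B n Cost)"
proof -
  define y where "y = xt (replicate k (\<lambda>_. 0))"
  have "y \<in> XB B"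
    using assms(5) Lfun_zero unfolding y_def panel_decision_def
    by (metis length_replicate in_set_replicate)
  then obtain j where yj: "y$j < min B 1"
    using XB_obtains_component_less_min assms(1,3,4) by blast
  define c where "c = min B 1"
  define Cost :: "nat \<Rightarrow> real^'m \<Rightarrow> real"
    where "Cost = (\<lambda>i. if i < k then (\<lambda>_. 0) else shortfall c j)"
  have nonneg: "0 \<le> Cost i x" for i x
    unfolding Cost_def by (simp add: shortfall_nonneg)
  have zero_at_axis: "Cost i (axis j c) = 0" for i
    by (simp add: Cost_def shortfall_axis)
  have "pb_instance B (2 * k) Cost"
    unfolding pb_instance_def Cost_def
    using assms(3) Lfun_zero Lfun_shortfall[of c j] mono_cost_const mono_cost_shortfall
    by (auto simp: c_def)
  moreover have "social_opt B (2 * k) Cost = 0"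
    using assms(3) zero_at_axis
    by (intro social_opt_eq_0[OF nonneg axis_in_XB[of c B j]]) (auto simp: c_def social_cost_def)
  moreover have "0 < expected_panel_cost (2 * k) k Cost xt"
  proof (rule expected_panel_cost_pos[OF nonneg lessThan_in_panels])
    have "panel_alloc xt Cost {..<k} = y"
      unfolding y_def by (rule panel_alloc_lessThan) (simp add: Cost_def)
    then show "0 < social_cost (2 * k) Cost (panel_alloc xt Cost {..<k})"
      using assms(2) yj by (intro social_cost_pos[OF nonneg, of k])
        (auto simp: Cost_def c_def shortfall_def)
  qed simp
  ultimately show ?thesis
    by (intro exI[of _ "2 * k"] exI[of _ Cost]) auto
qed

end
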